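(* Let $p$ be an odd prime, $M$ a Bousfield module and $x\in M$. There is some $k\ge1$ such that $\Phi_nx\equiv0\pmod p$ (i.e. $\Phi_nx\in p\,Rx$) for all $n\ge p^k(p-1)$.
   Context: $\mathbb{Z}_{(p)}$ denotes the $p$-local integers. Let $R=\mathbb{Z}_{(p)}[\mathbb{Z}_{(p)}^\times]$ be the group ring of the units of $\mathbb{Z}_{(p)}$, writing $\Psi^j\in R$ for $j\in\mathbb{Z}_{(p)}^\times$. Fix an integer $q$ primitive modulo $p^2$; put $q_i=q^{(-1)^i\lfloor i/2\rfloor}$, $\Theta_n(X)=\prod_{i=1}^n(X-q_i)$ and $\Phi_n=\Theta_n(\Psi^q)\in R$. A Bousfield module is an $R$-module $M$ such that for each $x\in M$: (a) $Rx$ is finitely generated over $\mathbb{Z}_{(p)}$; (b) for each $j\in\mathbb{Z}_{(p)}^\times$, $\Psi^j$ acts on $Rx\otimes\mathbb{Q}$ by a diagonalisable matrix whose eigenvalues are integer powers of $j$; (c) for each $m\ge1$ the action of $\mathbb{Z}_{(p)}^\times$ on $Rx/p^mRx$ factors through $\mathbb{Z}_{(p)}^\times\to(\mathbb{Z}/p^k\mathbb{Z})^\times$ for sufficiently large $k$. *)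

theory Defs
  imports "HOL-Number_Theory.Number_Theory"
begin

definition Zp :: "int \<Rightarrow> rat set" where
  "Zp p = {r. \<not> p dvd snd (quotient_of r)}"

definition Zp_units :: "int \<Rightarrow> rat set" where
  "Zp_units p = {r. \<not> p dvd snd (quotient_of r) \<and> \<not> p dvd fst (quotient_of r)}"

definition primitive_mod :: "int \<Rightarrow> int \<Rightarrow> bool" where
  "primitive_mod q m \<longleftrightarrow> coprime q m \<and>
     (\<forall>k::nat. 0 < k \<and> k < totient (nat m) \<longrightarrow> \<not> [q ^ k = 1] (mod m))"

text \<open>An R-module, R = Z_(p)[Z_(p)^x]: an abelian group with a Z_(p)-module structure
  (scalar action sc) and a Z_(p)-linear action psi of the group Z_(p)^x.\<close>
definition R_module :: "int \<Rightarrow> (rat \<Rightarrow> 'm::ab_group_add \<Rightarrow> 'm) \<Rightarrow> (rat \<Rightarrow> 'm \<Rightarrow> 'm) \<Rightarrow> bool" where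
  "R_module p sc psi \<longleftrightarrow>
     (\<forall>a\<in>Zp p. \<forall>b\<in>Zp p. \<forall>x. sc (a + b) x = sc a x + sc b x) \<and>
     (\<forall>a\<in>Zp p. \<forall>x y. sc a (x + y) = sc a x + sc a y) \<and>
     (\<forall>a\<in>Zp p. \<forall>b\<in>Zp p. \<forall>x. sc (a * b) x = sc a (sc b x)) \<and>
     (\<forall>x. sc 1 x = x) \<and>
     (\<forall>j\<in>Zp_units p. \<forall>x y. psi j (x + y) = psi j x + psi j y) \<and>
     (\<forall>j\<in>Zp_units p. \<forall>a\<in>Zp p. \<forall>x. psi j (sc a x) = sc a (psi j x)) \<and>
     (\<forall>x. psi 1 x = x) \<and>
     (\<forall>j\<in>Zp_units p. \<forall>k\<in>Zp_units p. \<forall>x. psi (j * k) x = psi j (psi k x))"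

definition Rspan :: "int \<Rightarrow> (rat \<Rightarrow> 'm::ab_group_add \<Rightarrow> 'm) \<Rightarrow> (rat \<Rightarrow> 'm \<Rightarrow> 'm) \<Rightarrow> 'm \<Rightarrow> 'm set" where
  "Rspan p sc psi x = {y. \<exists>J c. finite J \<and> J \<subseteq> Zp_units p \<and> (\<forall>j\<in>J. c j \<in> Zp p) \<and>
                          y = (\<Sum>j\<in>J. sc (c j) (psi j x))}"

definition Zp_span :: "int \<Rightarrow> (rat \<Rightarrow> 'm::ab_group_add \<Rightarrow> 'm) \<Rightarrow> 'm set \<Rightarrow> 'm set" where
  "Zp_span p sc S = {y. \<exists>F c. finite F \<and> F \<subseteq> S \<and> (\<forall>s\<in>F. c s \<in> Zp p) \<and>
                          y = (\<Sum>s\<in>F. sc (c s) s)}"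

text \<open>y maps to zero in (R x) \<otimes> Q, i.e. y is a torsion element.\<close>
definition is_torsion :: "int \<Rightarrow> (rat \<Rightarrow> 'm::ab_group_add \<Rightarrow> 'm) \<Rightarrow> 'm \<Rightarrow> bool" where
  "is_torsion p sc y \<longleftrightarrow> (\<exists>a\<in>Zp p. a \<noteq> 0 \<and> sc a y = 0)"

definition smul_set :: "(rat \<Rightarrow> 'm \<Rightarrow> 'm) \<Rightarrow> rat \<Rightarrow> 'm set \<Rightarrow> 'm set" where
  "smul_set sc a A = sc a ` A"

text \<open>Bousfield module conditions (a), (b), (c).
  (b) psi j acts on (R x) \<otimes> Q diagonalisably with eigenvalues integer powers of j:
  (R x) \<otimes> Q is spanned (over Q) by eigenvectors y \<otimes> 1, y in R x, with eigenvalue j powi k.\<close>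
definition Bousfield_module :: "int \<Rightarrow> (rat \<Rightarrow> 'm::ab_group_add \<Rightarrow> 'm) \<Rightarrow> (rat \<Rightarrow> 'm \<Rightarrow> 'm) \<Rightarrow> bool" where
  "Bousfield_module p sc psi \<longleftrightarrow> R_module p sc psi \<and>
    (\<forall>x. 
      \<comment> \<open>(a)\<close>
      (\<exists>S. finite S \<and> Rspan p sc psi x = Zp_span p sc S) \<and>
      \<comment> \<open>(b)\<close>
      (\<forall>j\<in>Zp_units p. \<exists>Y kk. finite Y \<and> Y \<subseteq> Rspan p sc psi x \<and>
          (\<forall>y\<in>Y. is_torsion p sc (psi j y - sc (j powi kk y) y)) \<and>
          (\<forall>z\<in>Rspan p sc psi x. \<exists>a\<in>Zp p. a \<noteq> 0 \<and>
               (\<exists>w\<in>Zp_span p sc Y. is_torsion p sc (sc a z - w)))) \<and>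
      \<comment> \<open>(c)\<close>
      (\<forall>m::nat. m \<ge> 1 \<longrightarrow> (\<exists>k::nat. \<forall>j\<in>Zp_units p. \<forall>j'\<in>Zp_units p.
          (j - j') / of_int (p ^ k) \<in> Zp p \<longrightarrow>
          (\<forall>y\<in>Rspan p sc psi x.
             psi j y - psi j' y \<in> smul_set sc (of_int (p ^ m)) (Rspan p sc psi x)))))"

definition q_idx :: "int \<Rightarrow> nat \<Rightarrow> rat" where
  "q_idx q i = (of_int q) powi ((-1) ^ i * int (i div 2))"

text \<open>Phi_n = Theta_n(psi q) = prod_{i=1..n} (psi q - q_i), acting on M.\<close>
fun Phi :: "(rat \<Rightarrow> 'm::ab_group_add \<Rightarrow> 'm) \<Rightarrow> (rat \<Rightarrow> 'm \<Rightarrow> 'm) \<Rightarrow> int \<Rightarrow> nat \<Rightarrow> 'm \<Rightarrow> 'm" where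
  "Phi sc psi q 0 y = y"
| "Phi sc psi q (Suc n) y = psi (of_int q) (Phi sc psi q n y) - sc (q_idx q (Suc n)) (Phi sc psi q n y)"

end

theory Submission
  imports Defs "HOL-Computational_Algebra.Polynomial"
begin

text \<open>Write T = psi^q and let d be the order of q modulo p. In Z_(p) each q_i = q^(e_i), with
  e_i = (-1)^i floor(i/2), is congruent modulo p to the integer q^(e_i mod d), so Phi_n x is congruent modulo p R x to
  Theta'_n(T) x, where Theta'_n is the integer polynomial with roots q^(e_i mod d), i = 1..n.
  The exponents e_1, e_2, e_4, ..., e_(2L-2) are 0, 1, ..., L - 1; hence for n >= 2L the
  polynomial Theta'_n is divisible by the product of the X - q^(e mod d) over e < L, which is
  C^(p^j) for L = d p^j and C the product of the X - q^f over f < d. The q^f are d distinct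
  roots of X^d - 1 over F_p, so C is congruent to X^d - 1, and by the Frobenius C^(p^j) is
  congruent to X^L - 1 modulo p. Finally q^L = 1 modulo p^(j+1), so for j large condition (c)
  makes T^L - 1, and with it Theta'_n(T), map R x into p R x.\<close>

section \<open>The p-local integers\<close>

lemma quotient_of_fraction_dvd:
  assumes "b \<noteq> 0" "quotient_of (of_int a / of_int b) = (n, e)"
  shows "n dvd a" "e dvd b"
proof -
  have "of_int a / of_int b = (of_int n / of_int e :: rat)"
    using quotient_of_div[OF assms(2)] .
  with assms(1) quotient_of_denom_pos[OF assms(2)] have eq: "a * e = n * b"
    by (simp add: field_simps flip: of_int_mult)
  have coprime: "coprime n e" using quotient_of_coprime[OF assms(2)] .
  from eq have "n dvd a * e" by (metis dvd_triv_left)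
  with coprime show "n dvd a" by (metis coprime_dvd_mult_left_iff)
  from eq have "e dvd n * b" by (metis dvd_triv_right)
  with coprime show "e dvd b" by (metis coprime_commute coprime_dvd_mult_right_iff)
qed

lemma Zp_iff_fraction:
  assumes "prime p"
  shows "r \<in> Zp p \<longleftrightarrow> (\<exists>a b. \<not> p dvd b \<and> r = of_int a / of_int b)"
proof
  assume "r \<in> Zp p"
  then show "\<exists>a b. \<not> p dvd b \<and> r = of_int a / of_int b"
    unfolding Zp_def by (metis mem_Collect_eq prod.collapse quotient_of_div)
next
  assume "\<exists>a b. \<not> p dvd b \<and> r = of_int a / of_int b"
  then obtain a b where b: "\<not> p dvd b" and r: "r = of_int a / of_int b" by blast
  obtain n e where ne: "quotient_of r = (n, e)" by fastforce
  have "b \<noteq> 0" using b by auto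
  then have "e dvd b" using ne unfolding r by (rule quotient_of_fraction_dvd)
  with b have "\<not> p dvd e" using dvd_trans by blast
  with ne show "r \<in> Zp p" by (simp add: Zp_def)
qed

lemma Zp_units_iff_fraction:
  assumes "prime p"
  shows "r \<in> Zp_units p \<longleftrightarrow> (\<exists>a b. \<not> p dvd a \<and> \<not> p dvd b \<and> r = of_int a / of_int b)"
proof
  assume "r \<in> Zp_units p"
  then show "\<exists>a b. \<not> p dvd a \<and> \<not> p dvd b \<and> r = of_int a / of_int b"
    unfolding Zp_units_def by (metis mem_Collect_eq prod.collapse quotient_of_div)
next
  assume "\<exists>a b. \<not> p dvd a \<and> \<not> p dvd b \<and> r = of_int a / of_int b"
  then obtain a b where ab: "\<not> p dvd a" "\<not> p dvd b" and r: "r = of_int a / of_int b" by blast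
  obtain n e where ne: "quotient_of r = (n, e)" by fastforce
  have "b \<noteq> 0" using ab by auto
  then have "n dvd a" "e dvd b" using ne unfolding r by (rule quotient_of_fraction_dvd)+
  with ab have "\<not> p dvd n" "\<not> p dvd e" using dvd_trans by blast+
  with ne show "r \<in> Zp_units p" by (simp add: Zp_units_def)
qed

context
  fixes p :: int
  assumes prime: "prime p"
begin

lemma not_dvd_one: "\<not> p dvd 1"
  using prime not_prime_unit by blast

lemma of_int_in_Zp: "of_int a \<in> Zp p"
  using not_dvd_one by (simp add: Zp_def)

lemma zero_in_Zp: "0 \<in> Zp p" and one_in_Zp: "1 \<in> Zp p"
  using of_int_in_Zp[of 0] of_int_in_Zp[of 1] by simp_all

lemma Zp_add: "r \<in> Zp p \<Longrightarrow> s \<in> Zp p \<Longrightarrow> r + s \<in> Zp p"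
  and Zp_mult: "r \<in> Zp p \<Longrightarrow> s \<in> Zp p \<Longrightarrow> r * s \<in> Zp p"
proof -
  assume "r \<in> Zp p" "s \<in> Zp p"
  then obtain a b c e where "\<not> p dvd b" "r = of_int a / of_int b"
    and "\<not> p dvd e" "s = of_int c / of_int e"
    by (auto simp: Zp_iff_fraction[OF prime])
  moreover from calculation have "\<not> p dvd b * e"
    using prime prime_dvd_mult_iff by blast
  moreover from calculation have "b \<noteq> 0" "e \<noteq> 0" by auto
  ultimately have "r + s = of_int (a * e + c * b) / of_int (b * e)"
    and "r * s = of_int (a * c) / of_int (b * e)" and "\<not> p dvd b * e"
    by (simp_all add: field_simps)
  then show "r + s \<in> Zp p" "r * s \<in> Zp p"
    unfolding Zp_iff_fraction[OF prime] by blast+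
qed

lemma Zp_diff: "r \<in> Zp p \<Longrightarrow> s \<in> Zp p \<Longrightarrow> r - s \<in> Zp p"
  using Zp_add[of r "of_int (-1) * s"] Zp_mult[OF of_int_in_Zp, of s "-1"] by simp

lemma of_int_in_Zp_units: "\<not> p dvd a \<Longrightarrow> of_int a \<in> Zp_units p"
  using not_dvd_one by (simp add: Zp_units_def)

lemma one_in_Zp_units: "1 \<in> Zp_units p"
  using of_int_in_Zp_units[of 1] not_dvd_one by simp

lemma Zp_units_nonzero: "j \<in> Zp_units p \<Longrightarrow> j \<noteq> 0"
  by (auto simp: Zp_units_def)

lemma Zp_units_mult:
  assumes "j \<in> Zp_units p" "k \<in> Zp_units p"
  shows "j * k \<in> Zp_units p"
proof -
  obtain a b c e where "\<not> p dvd a" "\<not> p dvd b" "j = of_int a / of_int b"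
    and "\<not> p dvd c" "\<not> p dvd e" "k = of_int c / of_int e"
    using assms by (auto simp: Zp_units_iff_fraction[OF prime])
  moreover from calculation have "\<not> p dvd a * c" "\<not> p dvd b * e"
    using prime prime_dvd_mult_iff by blast+
  ultimately show ?thesis
    unfolding Zp_units_iff_fraction[OF prime] by (intro exI[of _ "a * c"] exI[of _ "b * e"]) simp
qed

lemma fraction_in_Zp_coset:
  assumes "\<not> p dvd b" "p dvd a - c * b"
  shows "\<exists>s\<in>Zp p. of_int a / of_int b = of_int c + of_int p * s"
proof -
  obtain t where "a - c * b = p * t" using assms(2) by blast
  then have t: "a = c * b + p * t" by simp
  have "b \<noteq> 0" using assms(1) by auto
  then have "of_int a / of_int b = of_int c + of_int p * (of_int t / of_int b :: rat)"
    by (simp add: t field_simps)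
  moreover have "of_int t / of_int b \<in> Zp p"
    using assms(1) Zp_iff_fraction[OF prime] by blast
  ultimately show ?thesis by blast
qed

end

section \<open>Congruences modulo p\<close>

lemma diff_dvd_power_diff: "c dvd a - b \<Longrightarrow> c dvd a ^ n - (b ^ n :: 'a::comm_ring_1)"
  by (metis dvd_mult2 power_diff_sumr2)

lemma dvd_diff_trans: "c dvd a - b \<Longrightarrow> c dvd b - e \<Longrightarrow> c dvd a - (e :: 'a::comm_ring_1)"
  by (drule (1) dvd_add) simp

lemma lift_dvd_power_minus_one:
  fixes u :: "'a::comm_ring_1" and p :: nat
  assumes "of_nat p dvd u - 1"
  shows "of_nat p ^ Suc j dvd u ^ (p ^ j) - 1"
proof (induction j)
  case 0
  then show ?case using assms by simp
next
  case (Suc j)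
  define v where "v = u ^ (p ^ j)"
  have "of_nat p dvd v - 1"
    using Suc v_def by (metis dvd_power dvd_trans zero_less_Suc)
  then have "of_nat p dvd (\<Sum>i<p. v ^ i - 1 ^ i)"
    by (intro dvd_sum) (use diff_dvd_power_diff dvd_trans in blast)
  then have "of_nat p dvd (\<Sum>i<p. v ^ i) - of_nat p"
    by (simp add: sum_subtractf)
  then have "of_nat p dvd (\<Sum>i<p. v ^ i)"
    by (metis diff_add_cancel dvd_add dvd_refl)
  with Suc have "of_nat p ^ Suc j * of_nat p dvd (v - 1) * (\<Sum>i<p. v ^ i)"
    unfolding v_def by (rule mult_dvd_mono)
  moreover have "u ^ (p ^ Suc j) - 1 = (v - 1) * (\<Sum>i<p. v ^ i)"
    unfolding v_def power_diff_1_eq[symmetric] by (simp add: power_mult[symmetric] mult.commute)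
  ultimately show ?case by (simp add: ac_simps)
qed

lemma freshmans_dream_dvd:
  fixes a b :: "'a::comm_ring_1"
  assumes "prime p"
  shows "of_nat p dvd (a + b) ^ p - (a ^ p + b ^ p)"
proof -
  define f where "f k = of_nat (p choose k) * a ^ k * b ^ (p - k)" for k
  have "{..p} = insert p (insert 0 {1..<p})" using prime_gt_0_nat[OF assms] by auto
  then have "(a + b) ^ p - (a ^ p + b ^ p) = (\<Sum>k\<in>{1..<p}. f k)"
    unfolding binomial_ring f_def[symmetric] using prime_gt_0_nat[OF assms]
    by (simp add: f_def)
  also have "of_nat p dvd \<dots>"
  proof (intro dvd_sum)
    fix k assume "k \<in> {1..<p}"
    then have "p dvd (p choose k)" by (intro dvd_choose_prime assms) auto
    then obtain c where "p choose k = p * c" ..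
    then show "of_nat p dvd f k" by (simp add: f_def mult.assoc)
  qed
  finally show ?thesis .
qed

lemma freshmans_dream_dvd':
  fixes a b :: "'a::comm_ring_1"
  assumes "prime p"
  shows "of_nat p dvd (a + b) ^ (p ^ j) - (a ^ (p ^ j) + b ^ (p ^ j))"
proof (induction j)
  case (Suc j)
  have "of_nat p dvd ((a + b) ^ (p ^ j)) ^ p - (a ^ (p ^ j) + b ^ (p ^ j)) ^ p"
    using Suc by (rule diff_dvd_power_diff)
  moreover have "of_nat p dvd (a ^ (p ^ j) + b ^ (p ^ j)) ^ p - (a ^ (p ^ Suc j) + b ^ (p ^ Suc j))"
    using freshmans_dream_dvd[OF assms, of "a ^ p ^ j" "b ^ p ^ j"]
    by (simp only: power_mult[symmetric] power_Suc2)
  ultimately show ?case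
    by (simp only: power_mult[symmetric] power_Suc2 dvd_diff_trans)
qed simp

lemma fermat_theorem_int:
  fixes p q :: int
  assumes "prime p" "\<not> p dvd q"
  shows "p dvd q ^ (nat p - 1) - 1"
proof -
  have "residues p" unfolding residues_def using prime_gt_1_int[OF assms(1)] by simp
  moreover have "coprime q p"
    using assms prime_imp_coprime coprime_commute by blast
  ultimately have "[q ^ totient (nat p) = 1] (mod p)" by (rule residues.euler_theorem)
  moreover have "totient (nat p) = nat p - 1" using assms(1) by (simp add: totient_prime)
  ultimately show ?thesis by (simp add: cong_iff_dvd_diff cong_sym_eq)
qed

lemma prime_const_dvd_poly_if_roots:
  fixes p :: int and g :: "int poly"
  assumes "prime p" "finite S" "\<forall>a\<in>S. \<forall>b\<in>S. p dvd a - b \<longrightarrow> a = b"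
    and "degree g < card S" "\<forall>a\<in>S. p dvd poly g a"
  shows "[:p:] dvd g"
  using assms(2-5)
proof (induction S arbitrary: g rule: finite_induct)
  case (insert a S)
  define h where "h = synthetic_div g a"
  have g: "g = [:-a, 1:] * h + [:poly g a:]"
    using synthetic_div_correct'[of a g] h_def by simp
  have "[:p:] dvd [:poly g a:]"
    using insert.prems(3) by simp
  moreover have "[:p:] dvd h"
  proof (cases "S = {}")
    case True
    then have "h = 0" using insert.prems(2) by (simp add: h_def synthetic_div_eq_0_iff)
    then show ?thesis by simp
  next
    case False
    have "p dvd poly h b" if "b \<in> S" for b
    proof -
      have "poly g b = (b - a) * poly h b + poly g a"
        by (subst g) (simp add: algebra_simps)
      then have "p dvd (b - a) * poly h b"
        using insert.prems(3) that by (metis dvd_add_left_iff insert_iff)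
      moreover have "\<not> p dvd b - a"
        using insert.prems(1) insert.hyps(2) that by blast
      ultimately show ?thesis using assms(1) prime_dvd_mult_iff by blast
    qed
    moreover have "degree h < card S"
    proof -
      have "card S > 0" using False insert.hyps(1) by (simp add: card_gt_0_iff)
      with insert.prems(2) insert.hyps show ?thesis by (simp add: h_def degree_synthetic_div)
    qed
    ultimately show ?thesis using insert.IH insert.prems(1) by blast
  qed
  ultimately have "[:p:] dvd [:-a, 1:] * h + [:poly g a:]" by (blast intro: dvd_add dvd_mult)
  with g show ?case by metis
qed simp

lemma prod_mod_period: "(\<Prod>e<d * n. f (e mod d)) = (\<Prod>i<d. f i :: 'a::comm_monoid_mult) ^ n"
proof -
  have "(\<Prod>e<d * n. f (e mod d)) = (\<Prod>m<n. \<Prod>e\<in>{m * d..<m * d + d}. f (e mod d))"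
    using prod.nat_group[of "\<lambda>e. f (e mod d)" d n] by (simp add: mult.commute)
  also have "\<dots> = (\<Prod>m<n. \<Prod>i<d. f i)"
  proof (rule prod.cong[OF refl])
    fix m
    show "(\<Prod>e\<in>{m * d..<m * d + d}. f (e mod d)) = (\<Prod>i<d. f i)"
      using prod.shift_bounds_nat_ivl[of "\<lambda>e. f (e mod d)" 0 "m * d" d]
      by (simp add: add.commute atLeast0LessThan)
  qed
  finally show ?thesis by simp
qed

lemma X_pow_minus_one_pow_cong:
  fixes p :: int
  assumes "prime p" "odd p"
  shows "[:p:] dvd (monom 1 d - 1) ^ (nat p ^ j) - (monom 1 (d * nat p ^ j) - 1)"
proof -
  have "of_nat (nat p) dvd (monom 1 d + (-1)) ^ (nat p ^ j)
      - (monom 1 d ^ (nat p ^ j) + (-1) ^ (nat p ^ j) :: int poly)"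
    using assms(1) by (intro freshmans_dream_dvd') simp
  moreover have "of_nat (nat p) = [:p:]"
    using prime_ge_2_int[OF assms(1)] by (simp add: of_nat_poly)
  moreover have "odd (nat p ^ j)"
    using assms(2) prime_ge_2_int[OF assms(1)] by (simp add: even_nat_iff)
  ultimately show ?thesis by (simp add: monom_power)
qed

definition exponent_idx :: "nat \<Rightarrow> int" where
  "exponent_idx i = (-1) ^ i * int (i div 2)"

text \<open>Theta_n with each q_i = q powi exponent_idx i replaced by the integer
  q^(exponent_idx i mod d); for d the order of q mod p the two agree modulo p Z_(p).\<close>
definition Theta_int :: "int \<Rightarrow> nat \<Rightarrow> nat \<Rightarrow> int poly" where
  "Theta_int q d n = (\<Prod>i\<in>{1..n}. [:- (q ^ nat (exponent_idx i mod int d)), 1:])"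

lemma Theta_int_Suc:
  "Theta_int q d (Suc n) = [:- (q ^ nat (exponent_idx (Suc n) mod int d)), 1:] * Theta_int q d n"
  by (simp add: Theta_int_def mult.commute)

lemma prod_X_minus_powers_mod_dvd_Theta_int:
  assumes "2 * L \<le> n"
  shows "(\<Prod>e<L. [:-(q ^ (e mod d)), 1:]) dvd Theta_int q d n"
proof -
  define h where "h e = (if e = 0 then 1 else 2 * e)" for e :: nat
  have "inj_on h {..<L}" unfolding h_def by (rule inj_onI) (auto split: if_splits)
  moreover have "exponent_idx (h e) = int e" for e by (simp add: h_def exponent_idx_def)
  ultimately have "(\<Prod>e<L. [:-(q ^ (e mod d)), 1:])
      = (\<Prod>i\<in>h ` {..<L}. [:- (q ^ nat (exponent_idx i mod int d)), 1:])"
    by (simp add: prod.reindex flip: of_nat_mod)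
  also have "\<dots> dvd Theta_int q d n"
    unfolding Theta_int_def using assms by (intro prod_dvd_prod_subset) (auto simp: h_def)
  finally show ?thesis .
qed

definition mult_order :: "int \<Rightarrow> int \<Rightarrow> nat" where
  "mult_order p q = (LEAST d. 0 < d \<and> p dvd q ^ d - 1)"

context
  fixes p q :: int
  assumes prime: "prime p" and coprime: "\<not> p dvd q"
begin

lemma mult_order_pos: "0 < mult_order p q"
  and dvd_power_mult_order_minus_one: "p dvd q ^ mult_order p q - 1"
  and mult_order_le: "mult_order p q \<le> nat p - 1"
proof -
  have fermat: "0 < nat p - 1 \<and> p dvd q ^ (nat p - 1) - 1"
    using fermat_theorem_int[OF prime coprime] prime_ge_2_int[OF prime] by simp
  show "0 < mult_order p q" "p dvd q ^ mult_order p q - 1"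
    using LeastI[of "\<lambda>d. 0 < d \<and> p dvd q ^ d - 1", OF fermat]
    unfolding mult_order_def by auto
  show "mult_order p q \<le> nat p - 1"
    using Least_le[of "\<lambda>d. 0 < d \<and> p dvd q ^ d - 1", OF fermat]
    unfolding mult_order_def by simp
qed

lemma not_dvd_power: "\<not> p dvd q ^ n"
  using prime coprime prime_dvd_power by blast

lemma dvd_power_diff_if_cong_mult_order:
  assumes "[a = b] (mod mult_order p q)"
  shows "p dvd q ^ a - q ^ b"
proof -
  define d where "d = mult_order p q"
  have reduce: "p dvd q ^ c - q ^ (c mod d)" for c
  proof -
    have "p dvd (q ^ d) ^ (c div d) - 1 ^ (c div d)"
      using dvd_power_mult_order_minus_one unfolding d_def by (rule diff_dvd_power_diff)
    then have "p dvd ((q ^ d) ^ (c div d) - 1) * q ^ (c mod d)" by simp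
    moreover have "q ^ c = q ^ (d * (c div d) + c mod d)" by simp
    then have "q ^ c = (q ^ d) ^ (c div d) * q ^ (c mod d)" by (simp only: power_add power_mult)
    ultimately show ?thesis by (simp add: algebra_simps)
  qed
  have "a mod d = b mod d" using assms d_def by (simp add: cong_def)
  then show ?thesis
    using dvd_diff_trans[OF reduce[of a], of "q ^ b"] reduce[of b] by (simp add: dvd_diff_commute)
qed

lemma power_inj_below_mult_order:
  assumes "a < mult_order p q" "b < mult_order p q" "p dvd q ^ a - q ^ b"
  shows "a = b"
proof -
  have impossible: False if "a < b" "b < mult_order p q" "p dvd q ^ b - q ^ a" for a b
  proof -
    have "q ^ b - q ^ a = q ^ a * (q ^ (b - a) - 1)"
      using that by (simp add: algebra_simps power_add[symmetric])
    then have "0 < b - a \<and> p dvd q ^ (b - a) - 1"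
      using that not_dvd_power prime prime_dvd_mult_iff by (metis zero_less_diff)
    moreover have "b - a < mult_order p q" using that by simp
    ultimately show False
      unfolding mult_order_def using not_less_Least by blast
  qed
  show ?thesis
  proof (cases a b rule: linorder_cases)
    case less
    then show ?thesis using impossible[of a b] assms dvd_diff_commute by blast
  next
    case greater
    then show ?thesis using impossible[of b a] assms by blast
  qed
qed

lemma prod_X_minus_powers_cong:
  "[:p:] dvd (\<Prod>f<mult_order p q. [:-(q ^ f), 1:]) - (monom 1 (mult_order p q) - 1)"
proof -
  define d where "d = mult_order p q"
  define C where "C = (\<Prod>f<d. [:-(q ^ f), 1:])"
  define g where "g = C - (monom 1 d - 1)"
  define S where "S = (\<lambda>f. q ^ f) ` {..<d}"
  have "d > 0" using mult_order_pos d_def by simp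
  have "inj_on (\<lambda>f. q ^ f) {..<d}"
    by (rule inj_onI) (use power_inj_below_mult_order d_def in auto)
  then have card_S: "card S = d" unfolding S_def by (simp add: card_image)
  have deg_C: "degree C = d" by (simp add: C_def degree_prod_eq_sum_degree)
  moreover have "lead_coeff C = 1" by (simp add: C_def lead_coeff_prod)
  ultimately have deg_g: "degree g < d"
    using \<open>d > 0\<close> by (intro degree_lessI) (auto simp: g_def coeff_eq_0)
  have roots: "p dvd poly g a" if "a \<in> S" for a
  proof -
    obtain f where "f < d" "a = q ^ f" using \<open>a \<in> S\<close> unfolding S_def by auto
    then have "poly g a = 1 - (q ^ d) ^ f"
      by (auto simp: g_def C_def poly_prod poly_monom power_mult[symmetric] mult.commute intro!: prod_zero)
    moreover have "p dvd (q ^ d) ^ f - 1 ^ f"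
      using dvd_power_mult_order_minus_one d_def by (simp only: diff_dvd_power_diff)
    ultimately show ?thesis by (simp add: dvd_diff_commute)
  qed
  have distinct: "\<forall>a\<in>S. \<forall>b\<in>S. p dvd a - b \<longrightarrow> a = b"
    unfolding S_def d_def using power_inj_below_mult_order by auto
  have "[:p:] dvd g"
    by (rule prime_const_dvd_poly_if_roots[OF prime _ distinct]) (use deg_g roots card_S S_def in auto)
  then show ?thesis unfolding g_def C_def d_def .
qed

lemma power_int_cong_mult_order:
  "\<exists>s\<in>Zp p. of_int q powi e = of_int (q ^ nat (e mod int (mult_order p q))) + of_int p * s"
proof -
  define d where "d = mult_order p q"
  define f a b where "f = nat (e mod int d)" and "a = nat e" and "b = nat (- e)"
  \<comment> \<open>one of a and b is 0, which treats both signs of e at once\<close>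
  have powi: "of_int q powi e = of_int (q ^ a) / (of_int (q ^ b) :: rat)"
    by (auto simp: power_int_def a_def b_def power_inverse divide_inverse)
  have "int d dvd int a - int (f + b)"
    using mult_order_pos by (simp add: a_def b_def f_def d_def flip: minus_mod_eq_mult_div)
  then have "[a = f + b] (mod d)"
    by (simp add: cong_iff_dvd_diff flip: cong_int_iff)
  then have "p dvd q ^ a - q ^ (f + b)"
    using dvd_power_diff_if_cong_mult_order d_def by blast
  then have "p dvd q ^ a - q ^ f * q ^ b" by (simp add: power_add)
  with not_dvd_power show ?thesis
    unfolding powi f_def d_def by (intro fraction_in_Zp_coset[OF prime])
qed

lemma q_idx_cong_mult_order:
  "\<exists>s\<in>Zp p. q_idx q i = of_int (q ^ nat (exponent_idx i mod int (mult_order p q))) + of_int p * s"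
  using power_int_cong_mult_order unfolding q_idx_def exponent_idx_def .

lemma q_idx_in_Zp: "q_idx q i \<in> Zp p"
  using q_idx_cong_mult_order[of i] Zp_add[OF prime] Zp_mult[OF prime] of_int_in_Zp[OF prime] by metis

lemma prime_power_dvd_power_mult_order_pow: "p ^ Suc k dvd q ^ (mult_order p q * nat p ^ k) - 1"
proof -
  have "of_nat (nat p) = p" using prime_ge_2_int[OF prime] by simp
  then show ?thesis
    using lift_dvd_power_minus_one[of "nat p" "q ^ mult_order p q" k] dvd_power_mult_order_minus_one
    by (simp add: power_mult)
qed

lemma double_mult_order_pow_le: "2 * (mult_order p q * nat p ^ k) \<le> nat (p ^ Suc k * (p - 1))"
proof -
  have "nat (p ^ Suc k * (p - 1)) = nat p * (nat p - 1) * nat p ^ k"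
    using prime_ge_2_int[OF prime] by (simp add: nat_mult_distrib nat_power_eq nat_diff_distrib)
  moreover have "2 * mult_order p q \<le> nat p * (nat p - 1)"
    using mult_order_le prime_ge_2_int[OF prime] by (intro mult_le_mono) auto
  ultimately show ?thesis by simp
qed

lemma Theta_int_cong:
  assumes "odd p" "L = mult_order p q * nat p ^ j" "2 * L \<le> n"
  shows "\<exists>R. [:p:] dvd Theta_int q (mult_order p q) n - (monom 1 L - 1) * R"
proof -
  define d where "d = mult_order p q"
  define B where "B = (\<Prod>e<L. [:-(q ^ (e mod d)), 1:])"
  obtain R where R: "Theta_int q d n = B * R"
    using prod_X_minus_powers_mod_dvd_Theta_int[OF assms(3)] unfolding B_def by blast
  have "B = (\<Prod>f<d. [:-(q ^ f), 1:]) ^ (nat p ^ j)"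
    unfolding B_def assms(2) d_def[symmetric] by (rule prod_mod_period)
  moreover have "[:p:] dvd (\<Prod>f<d. [:-(q ^ f), 1:]) ^ (nat p ^ j) - (monom 1 d - 1) ^ (nat p ^ j)"
    using prod_X_minus_powers_cong unfolding d_def by (rule diff_dvd_power_diff)
  moreover have "[:p:] dvd (monom 1 d - 1) ^ (nat p ^ j) - (monom 1 L - 1)"
    using X_pow_minus_one_pow_cong[OF prime assms(1)] assms(2) d_def by simp
  ultimately have "[:p:] dvd (B - (monom 1 L - 1)) * R"
    by (metis dvd_diff_trans dvd_mult2)
  then show ?thesis
    unfolding d_def[symmetric] R by (auto simp: algebra_simps)
qed

end

lemma not_dvd_if_primitive_mod_square:
  assumes "prime p" "primitive_mod q (p ^ 2)"
  shows "\<not> p dvd q"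
proof
  assume "p dvd q"
  moreover have "coprime q (p ^ 2)" using assms(2) unfolding primitive_mod_def by blast
  moreover have "p dvd p ^ 2" by simp
  ultimately show False using assms(1) coprime_common_divisor not_prime_unit by blast
qed

section \<open>R-modules\<close>

locale p_local_R_module =
  fixes p :: int and sc psi :: "rat \<Rightarrow> 'm::ab_group_add \<Rightarrow> 'm"
  assumes prime: "prime p" and R_module: "R_module p sc psi"
begin

lemma
  shows sc_add_left: "a \<in> Zp p \<Longrightarrow> b \<in> Zp p \<Longrightarrow> sc (a + b) y = sc a y + sc b y"
    and sc_mult: "a \<in> Zp p \<Longrightarrow> b \<in> Zp p \<Longrightarrow> sc (a * b) y = sc a (sc b y)"
    and sc_one [simp]: "sc 1 y = y"
    and psi_sc: "j \<in> Zp_units p \<Longrightarrow> a \<in> Zp p \<Longrightarrow> psi j (sc a y) = sc a (psi j y)"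
    and psi_mult: "j \<in> Zp_units p \<Longrightarrow> k \<in> Zp_units p \<Longrightarrow> psi (j * k) y = psi j (psi k y)"
    and psi_one [simp]: "psi 1 y = y"
    and additive_sc: "a \<in> Zp p \<Longrightarrow> additive (sc a)"
    and additive_psi: "j \<in> Zp_units p \<Longrightarrow> additive (psi j)"
  using R_module unfolding R_module_def additive_def by blast+

lemma sc_zero_left [simp]: "sc 0 y = 0"
  using sc_add_left[OF zero_in_Zp zero_in_Zp, of y] prime by simp

lemma sc_diff_left: "a \<in> Zp p \<Longrightarrow> b \<in> Zp p \<Longrightarrow> sc (a - b) y = sc a y - sc b y"
  using sc_add_left[of "a - b" b y] Zp_diff[OF prime] by (simp add: eq_diff_eq)

definition R_submodule :: "'m set \<Rightarrow> bool" where
  "R_submodule A \<longleftrightarrow> 0 \<in> A \<and> (\<forall>y\<in>A. \<forall>z\<in>A. y + z \<in> A) \<and>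
     (\<forall>a\<in>Zp p. \<forall>y\<in>A. sc a y \<in> A) \<and> (\<forall>j\<in>Zp_units p. \<forall>y\<in>A. psi j y \<in> A)"

context
  fixes A assumes A: "R_submodule A"
begin

lemma
  shows submodule_zero: "0 \<in> A"
    and submodule_add: "y \<in> A \<Longrightarrow> z \<in> A \<Longrightarrow> y + z \<in> A"
    and submodule_sc: "a \<in> Zp p \<Longrightarrow> y \<in> A \<Longrightarrow> sc a y \<in> A"
    and submodule_psi: "j \<in> Zp_units p \<Longrightarrow> y \<in> A \<Longrightarrow> psi j y \<in> A"
  using A unfolding R_submodule_def by blast+

lemma submodule_diff:
  assumes "y \<in> A" "z \<in> A" shows "y - z \<in> A"
proof -
  have "sc (0 - 1) z = - z" using sc_diff_left[OF zero_in_Zp one_in_Zp] prime by simp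
  then show ?thesis
    using submodule_add[OF assms(1) submodule_sc[OF Zp_diff[OF prime zero_in_Zp one_in_Zp] assms(2)]]
    prime by simp
qed

lemma R_submodule_smul_set:
  assumes "a \<in> Zp p" shows "R_submodule (smul_set sc a A)"
  unfolding R_submodule_def smul_set_def
proof (intro conjI ballI)
  show "0 \<in> sc a ` A"
    using submodule_zero additive.zero[OF additive_sc[OF assms]] by force
  show "y + z \<in> sc a ` A" if yz: "y \<in> sc a ` A" "z \<in> sc a ` A" for y z
  proof -
    obtain u v where "u \<in> A" "v \<in> A" "y = sc a u" "z = sc a v" using yz by blast
    then show ?thesis
      using submodule_add additive.add[OF additive_sc[OF assms]] by (metis image_eqI)
  qed
  show "sc b y \<in> sc a ` A" if b: "b \<in> Zp p" and y: "y \<in> sc a ` A" for b y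
  proof -
    obtain z where "z \<in> A" "y = sc a z" using y by blast
    then have "sc b y = sc a (sc b z)"
      using sc_mult[OF b assms] sc_mult[OF assms b] by (simp add: mult.commute)
    then show ?thesis using submodule_sc[OF b \<open>z \<in> A\<close>] by blast
  qed
  show "psi j y \<in> sc a ` A" if "j \<in> Zp_units p" "y \<in> sc a ` A" for j y
    using that submodule_psi psi_sc[OF that(1) assms] by blast
qed

end

lemma smul_mem_smul_set: "y \<in> A \<Longrightarrow> sc a y \<in> smul_set sc a A"
  unfolding smul_set_def by blast

lemma mem_Rspan_self: "x \<in> Rspan p sc psi x"
  unfolding Rspan_def
  by (intro CollectI exI[of _ "{1}"] exI[of _ "\<lambda>_. 1"])
    (simp add: one_in_Zp_units[OF prime] one_in_Zp[OF prime])

lemma Rspan_zero: "0 \<in> Rspan p sc psi x"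
  unfolding Rspan_def by (intro CollectI exI[of _ "{}"]) simp

lemma Rspan_add:
  assumes "y \<in> Rspan p sc psi x" "z \<in> Rspan p sc psi x"
  shows "y + z \<in> Rspan p sc psi x"
proof -
  obtain J c K e where J: "finite J" "J \<subseteq> Zp_units p" "\<forall>j\<in>J. c j \<in> Zp p"
      and y: "y = (\<Sum>j\<in>J. sc (c j) (psi j x))"
      and K: "finite K" "K \<subseteq> Zp_units p" "\<forall>j\<in>K. e j \<in> Zp p"
      and z: "z = (\<Sum>j\<in>K. sc (e j) (psi j x))"
    using assms unfolding Rspan_def by blast
  define c' e' where "c' j = (if j \<in> J then c j else 0)" and "e' j = (if j \<in> K then e j else 0)" for j
  have Zp: "c' j \<in> Zp p" "e' j \<in> Zp p" for j
    using J(3) K(3) zero_in_Zp[OF prime] by (auto simp: c'_def e'_def)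
  have "y = (\<Sum>j\<in>J \<union> K. sc (c' j) (psi j x))" "z = (\<Sum>j\<in>J \<union> K. sc (e' j) (psi j x))"
    unfolding y z c'_def e'_def using J(1) K(1) by (auto intro!: sum.mono_neutral_cong_left)
  then have "y + z = (\<Sum>j\<in>J \<union> K. sc (c' j + e' j) (psi j x))"
    by (simp add: sc_add_left[OF Zp] sum.distrib)
  moreover have "c' j + e' j \<in> Zp p" for j using Zp_add[OF prime Zp] .
  ultimately show ?thesis
    unfolding Rspan_def using J K by (intro CollectI exI[of _ "J \<union> K"] exI[of _ "\<lambda>j. c' j + e' j"]) auto
qed

lemma Rspan_sc:
  assumes a: "a \<in> Zp p" and "y \<in> Rspan p sc psi x"
  shows "sc a y \<in> Rspan p sc psi x"
proof -
  obtain J c where J: "finite J" "J \<subseteq> Zp_units p" "\<forall>j\<in>J. c j \<in> Zp p"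
      and y: "y = (\<Sum>j\<in>J. sc (c j) (psi j x))"
    using assms(2) unfolding Rspan_def by blast
  have "sc a y = (\<Sum>j\<in>J. sc (a * c j) (psi j x))"
    unfolding y additive.sum[OF additive_sc[OF a]] using J(3) by (simp add: sc_mult[OF a])
  then show ?thesis
    unfolding Rspan_def using J Zp_mult[OF prime a]
    by (intro CollectI exI[of _ J] exI[of _ "\<lambda>j. a * c j"]) auto
qed

lemma Rspan_psi:
  assumes k: "k \<in> Zp_units p" and "y \<in> Rspan p sc psi x"
  shows "psi k y \<in> Rspan p sc psi x"
proof -
  obtain J c where J: "finite J" "J \<subseteq> Zp_units p" "\<forall>j\<in>J. c j \<in> Zp p"
      and y: "y = (\<Sum>j\<in>J. sc (c j) (psi j x))"
    using assms(2) unfolding Rspan_def by blast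
  have "k \<noteq> 0" using Zp_units_nonzero[OF prime k] .
  then have inj: "inj_on (\<lambda>j. k * j) J" by (auto simp: inj_on_def)
  have "psi k y = (\<Sum>j\<in>J. sc (c j) (psi (k * j) x))"
    unfolding y additive.sum[OF additive_psi[OF k]] using J(2,3)
    by (intro sum.cong refl) (auto simp: psi_sc[OF k] psi_mult[OF k])
  also have "\<dots> = (\<Sum>j\<in>(\<lambda>j. k * j) ` J. sc (c (j / k)) (psi j x))"
    using \<open>k \<noteq> 0\<close> by (simp add: sum.reindex[OF inj])
  finally show ?thesis
    unfolding Rspan_def using J \<open>k \<noteq> 0\<close> Zp_units_mult[OF prime k]
    by (intro CollectI exI[of _ "(\<lambda>j. k * j) ` J"] exI[of _ "\<lambda>j. c (j / k)"]) auto
qed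

lemma R_submodule_Rspan: "R_submodule (Rspan p sc psi x)"
  unfolding R_submodule_def using Rspan_zero Rspan_add Rspan_sc Rspan_psi by blast

end

section \<open>The Adams operation psi^q modulo p\<close>

locale Adams_operation = p_local_R_module p sc psi
  for p and sc psi :: "rat \<Rightarrow> 'm::ab_group_add \<Rightarrow> 'm" +
  fixes q :: int
  assumes coprime: "\<not> p dvd q"
begin

abbreviation T :: "'m \<Rightarrow> 'm" where
  "T \<equiv> psi (of_int q)"

lemma unit_q: "of_int q \<in> Zp_units p"
  using of_int_in_Zp_units[OF prime coprime] .

lemma additive_T: "additive T"
  using additive_psi[OF unit_q] .

lemma T_zero [simp]: "T 0 = 0"
  using additive.zero[OF additive_T] .

lemma funpow_T: "(T ^^ n) y = psi (of_int (q ^ n)) y"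
proof (induction n arbitrary: y)
  case (Suc n)
  have "of_int (q ^ n) \<in> Zp_units p"
    using of_int_in_Zp_units[OF prime not_dvd_power[OF prime coprime]] .
  then show ?case using Suc psi_mult[OF unit_q] by simp
qed simp

definition poly_T :: "int poly \<Rightarrow> 'm \<Rightarrow> 'm" where
  "poly_T P y = (\<Sum>i\<le>degree P. sc (of_int (coeff P i)) ((T ^^ i) y))"

lemma poly_T_eq_sum:
  assumes "degree P \<le> N"
  shows "poly_T P y = (\<Sum>i\<le>N. sc (of_int (coeff P i)) ((T ^^ i) y))"
  unfolding poly_T_def using assms by (intro sum.mono_neutral_left) (auto simp: coeff_eq_0)

lemma poly_T_pCons: "poly_T (pCons a P) y = sc (of_int a) y + T (poly_T P y)"
proof -
  have "poly_T (pCons a P) y = (\<Sum>i\<le>Suc (degree P). sc (of_int (coeff (pCons a P) i)) ((T ^^ i) y))"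
    using degree_pCons_le by (intro poly_T_eq_sum) auto
  also have "\<dots> = sc (of_int a) y + (\<Sum>i\<le>degree P. sc (of_int (coeff P i)) (T ((T ^^ i) y)))"
    by (simp only: sum.atMost_Suc_shift) simp
  also have "\<dots> = sc (of_int a) y + T (poly_T P y)"
    unfolding poly_T_def additive.sum[OF additive_T]
    by (simp add: psi_sc[OF unit_q of_int_in_Zp[OF prime]])
  finally show ?thesis .
qed

lemma poly_T_0 [simp]: "poly_T 0 y = 0"
  by (simp add: poly_T_def)

lemma poly_T_1: "poly_T 1 y = y"
  using poly_T_pCons[of 1 0 y] by (simp add: one_pCons)

lemma poly_T_add: "poly_T (P + Q) y = poly_T P y + poly_T Q y"
proof -
  define N where "N = max (degree P) (degree Q)"
  have "degree P \<le> N" "degree Q \<le> N" "degree (P + Q) \<le> N"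
    using degree_add_le_max[of P Q] by (auto simp: N_def)
  then show ?thesis
    by (simp add: poly_T_eq_sum sum.distrib[symmetric] sc_add_left[OF of_int_in_Zp[OF prime] of_int_in_Zp[OF prime]])
qed

lemma poly_T_diff: "poly_T (P - Q) y = poly_T P y - poly_T Q y"
  using poly_T_add[of "P - Q" Q y] by (simp add: eq_diff_eq)

lemma poly_T_smult: "poly_T (smult a P) y = sc (of_int a) (poly_T P y)"
  using degree_smult_le[of a P]
  by (simp add: poly_T_eq_sum[of "smult a P" "degree P"] poly_T_def
      additive.sum[OF additive_sc[OF of_int_in_Zp[OF prime]]] sc_mult[OF of_int_in_Zp[OF prime] of_int_in_Zp[OF prime]])

lemma poly_T_mult: "poly_T (P * Q) y = poly_T P (poly_T Q y)"
  by (induction P) (simp_all add: poly_T_add poly_T_smult poly_T_pCons)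

lemma poly_T_monom: "poly_T (monom 1 n) y = (T ^^ n) y"
  by (induction n) (simp_all add: poly_T_1 monom_Suc poly_T_pCons monom_0 del: One_nat_def)

lemma poly_T_linear: "poly_T [:- r, 1:] y = T y - sc (of_int r) y"
proof -
  have "sc (of_int (- r)) y = - sc (of_int r) y"
    using sc_diff_left[OF zero_in_Zp[OF prime] of_int_in_Zp[OF prime], of r y] by simp
  then show ?thesis
    using poly_T_pCons[of "- r" "[:1:]" y] by (simp add: poly_T_1[unfolded one_pCons])
qed

context
  fixes A assumes A: "R_submodule A"
begin

lemma poly_T_mem: "y \<in> A \<Longrightarrow> poly_T P y \<in> A"
  by (induction P)
    (auto simp: poly_T_pCons A submodule_zero submodule_add submodule_sc submodule_psi
      unit_q of_int_in_Zp[OF prime])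

lemma poly_T_mem_smul_set_if_const_dvd:
  assumes "[:p:] dvd P" "y \<in> A"
  shows "poly_T P y \<in> smul_set sc (of_int p) A"
proof -
  obtain H where "P = smult p H" using assms(1) by (auto elim!: dvdE)
  then show ?thesis using poly_T_mem[OF assms(2)] smul_mem_smul_set by (simp add: poly_T_smult)
qed

lemma Phi_mem: "y \<in> A \<Longrightarrow> Phi sc psi q n y \<in> A"
  by (induction n)
    (auto intro: submodule_diff[OF A] submodule_psi[OF A unit_q] submodule_sc[OF A q_idx_in_Zp[OF prime coprime]])

lemma sc_cong_mem_smul_set:
  assumes "s \<in> Zp p" "y \<in> A"
  shows "sc (of_int r + of_int p * s) y - sc (of_int r) y \<in> smul_set sc (of_int p) A"
proof -
  have "sc (of_int r + of_int p * s) y - sc (of_int r) y = sc (of_int p) (sc s y)"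
    using assms(1) of_int_in_Zp[OF prime] Zp_mult[OF prime] by (simp add: sc_add_left sc_mult)
  then show ?thesis using submodule_sc[OF A assms] smul_mem_smul_set by metis
qed

lemma Phi_cong_poly_T_Theta_int:
  assumes "y \<in> A"
  shows "Phi sc psi q n y - poly_T (Theta_int q (mult_order p q) n) y \<in> smul_set sc (of_int p) A"
proof (induction n)
  case 0
  then show ?case
    using submodule_zero[OF R_submodule_smul_set[OF A of_int_in_Zp[OF prime]]]
    by (simp add: Theta_int_def poly_T_1)
next
  case (Suc n)
  let ?pA = "smul_set sc (of_int p) A"
  have pA: "R_submodule ?pA" using R_submodule_smul_set[OF A of_int_in_Zp[OF prime]] .
  define \<phi> \<theta> r where "\<phi> = Phi sc psi q n y" and "\<theta> = poly_T (Theta_int q (mult_order p q) n) y"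
    and "r = q ^ nat (exponent_idx (Suc n) mod int (mult_order p q))"
  have "\<phi> \<in> A" using Phi_mem[OF assms] \<phi>_def by simp
  have "\<phi> - \<theta> \<in> ?pA" using Suc \<phi>_def \<theta>_def by simp
  obtain s where s: "s \<in> Zp p" "q_idx q (Suc n) = of_int r + of_int p * s"
    using q_idx_cong_mult_order[OF prime coprime] unfolding r_def by blast
  have "poly_T (Theta_int q (mult_order p q) (Suc n)) y = T \<theta> - sc (of_int r) \<theta>"
    by (simp only: Theta_int_Suc poly_T_mult poly_T_linear \<theta>_def r_def)
  then have "Phi sc psi q (Suc n) y - poly_T (Theta_int q (mult_order p q) (Suc n)) y
      = (T \<phi> - T \<theta>) - (sc (of_int r) \<phi> - sc (of_int r) \<theta>)
        - (sc (q_idx q (Suc n)) \<phi> - sc (of_int r) \<phi>)"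
    by (simp add: \<phi>_def algebra_simps)
  moreover have "T \<phi> - T \<theta> \<in> ?pA"
    using submodule_psi[OF pA unit_q \<open>\<phi> - \<theta> \<in> ?pA\<close>] additive.diff[OF additive_T] by simp
  moreover have "sc (of_int r) \<phi> - sc (of_int r) \<theta> \<in> ?pA"
    using submodule_sc[OF pA of_int_in_Zp[OF prime] \<open>\<phi> - \<theta> \<in> ?pA\<close>]
      additive.diff[OF additive_sc[OF of_int_in_Zp[OF prime]]] by simp
  moreover have "sc (q_idx q (Suc n)) \<phi> - sc (of_int r) \<phi> \<in> ?pA"
    unfolding s(2) using sc_cong_mem_smul_set[OF s(1) \<open>\<phi> \<in> A\<close>] .
  ultimately show ?case using submodule_diff[OF pA] by presburger
qed

lemma Phi_mem_smul_set_if_funpow_T_cong: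
  assumes "odd p" "y \<in> A" "L = mult_order p q * nat p ^ j" "2 * L \<le> n"
    and T_L: "\<forall>z\<in>A. (T ^^ L) z - z \<in> smul_set sc (of_int p) A"
  shows "Phi sc psi q n y \<in> smul_set sc (of_int p) A"
proof -
  let ?\<Theta> = "Theta_int q (mult_order p q) n" and ?pA = "smul_set sc (of_int p) A"
  have pA: "R_submodule ?pA" using R_submodule_smul_set[OF A of_int_in_Zp[OF prime]] .
  obtain R where R: "[:p:] dvd ?\<Theta> - (monom 1 L - 1) * R"
    using Theta_int_cong[OF prime coprime assms(1,3,4)] by blast
  define W where "W = poly_T R y"
  have "poly_T ?\<Theta> y = ((T ^^ L) W - W) + poly_T (?\<Theta> - (monom 1 L - 1) * R) y"
    using poly_T_add[of "(monom 1 L - 1) * R" "?\<Theta> - (monom 1 L - 1) * R" y]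
    by (simp add: W_def poly_T_mult poly_T_diff poly_T_monom poly_T_1)
  moreover have "(T ^^ L) W - W \<in> ?pA" using T_L poly_T_mem[OF assms(2)] W_def by blast
  ultimately have "poly_T ?\<Theta> y \<in> ?pA"
    using submodule_add[OF pA] poly_T_mem_smul_set_if_const_dvd[OF R assms(2)] by simp
  moreover have "Phi sc psi q n y - poly_T ?\<Theta> y \<in> ?pA"
    using Phi_cong_poly_T_Theta_int[OF assms(2)] .
  ultimately show ?thesis
    using submodule_add[OF pA] by (metis diff_add_cancel)
qed

end

lemma funpow_T_mult_order_pow_cong:
  assumes "\<forall>j\<in>Zp_units p. \<forall>j'\<in>Zp_units p. (j - j') / of_int (p ^ k) \<in> Zp p \<longrightarrow> (\<forall>y\<in>A. psi j y - psi j' y \<in> B)"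
  shows "\<forall>z\<in>A. (T ^^ (mult_order p q * nat p ^ k)) z - z \<in> B"
proof
  fix z assume "z \<in> A"
  define L where "L = mult_order p q * nat p ^ k"
  have "p ^ k dvd q ^ L - 1"
    using dvd_trans[OF le_imp_power_dvd prime_power_dvd_power_mult_order_pow[OF prime coprime]] L_def
    by simp
  then obtain t where "q ^ L - 1 = p ^ k * t" ..
  then have "of_int (q ^ L) - 1 = (of_int (p ^ k) * of_int t :: rat)"
    by (metis of_int_1 of_int_diff of_int_mult)
  then have "(of_int (q ^ L) - 1) / of_int (p ^ k) = (of_int t :: rat)"
    using prime_gt_0_int[OF prime] by simp
  then have "(of_int (q ^ L) - 1) / of_int (p ^ k) \<in> Zp p"
    using of_int_in_Zp[OF prime] by simp
  moreover have "of_int (q ^ L) \<in> Zp_units p"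
    using of_int_in_Zp_units[OF prime not_dvd_power[OF prime coprime]] .
  ultimately have "psi (of_int (q ^ L)) z - psi 1 z \<in> B"
    using assms[rule_format, OF _ one_in_Zp_units[OF prime] _ \<open>z \<in> A\<close>] by blast
  then show "(T ^^ L) z - z \<in> B" by (simp add: funpow_T)
qed

end

lemma Bousfield_module_psi_cong_mod_p:
  assumes "Bousfield_module p sc psi"
  obtains k where "\<forall>j\<in>Zp_units p. \<forall>j'\<in>Zp_units p. (j - j') / of_int (p ^ k) \<in> Zp p \<longrightarrow>
    (\<forall>y\<in>Rspan p sc psi x. psi j y - psi j' y \<in> smul_set sc (of_int p) (Rspan p sc psi x))"
proof -
  have "\<forall>m::nat. m \<ge> 1 \<longrightarrow> (\<exists>k::nat. \<forall>j\<in>Zp_units p. \<forall>j'\<in>Zp_units p.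
      (j - j') / of_int (p ^ k) \<in> Zp p \<longrightarrow>
      (\<forall>y\<in>Rspan p sc psi x. psi j y - psi j' y \<in> smul_set sc (of_int (p ^ m)) (Rspan p sc psi x)))"
    using assms unfolding Bousfield_module_def by blast
  from this[rule_format, of 1] show ?thesis using that unfolding power_one_right by blast
qed

theorem lemma4p3:
  fixes p q :: int and sc psi :: "rat \<Rightarrow> 'm::ab_group_add \<Rightarrow> 'm" and x :: 'm
  assumes "prime p" and "odd p"
    and "primitive_mod q (p ^ 2)"
    and "Bousfield_module p sc psi"
  shows "\<exists>k::nat. k \<ge> 1 \<and> (\<forall>n::nat. n \<ge> nat (p ^ k * (p - 1)) \<longrightarrow>
           Phi sc psi q n x \<in> smul_set sc (of_int p) (Rspan p sc psi x))"
proof -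
  have "\<not> p dvd q" using not_dvd_if_primitive_mod_square[OF assms(1,3)] .
  moreover have "R_module p sc psi" using assms(4) unfolding Bousfield_module_def by blast
  ultimately interpret Adams_operation p sc psi q
    using assms(1) by unfold_locales
  let ?A = "Rspan p sc psi x" and ?pA = "smul_set sc (of_int p) (Rspan p sc psi x)"
  obtain k where "\<forall>j\<in>Zp_units p. \<forall>j'\<in>Zp_units p. (j - j') / of_int (p ^ k) \<in> Zp p \<longrightarrow>
      (\<forall>y\<in>?A. psi j y - psi j' y \<in> ?pA)"
    using Bousfield_module_psi_cong_mod_p[OF assms(4)] .
  then have T_L: "\<forall>z\<in>?A. (T ^^ (mult_order p q * nat p ^ k)) z - z \<in> ?pA"
    by (rule funpow_T_mult_order_pow_cong)
  show ?thesis
  proof (intro exI[of _ "Suc k"] conjI allI impI)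
    fix n assume "nat (p ^ Suc k * (p - 1)) \<le> n"
    then have "2 * (mult_order p q * nat p ^ k) \<le> n"
      using double_mult_order_pow_le[OF assms(1) coprime, of k] by linarith
    then show "Phi sc psi q n x \<in> ?pA"
      using Phi_mem_smul_set_if_funpow_T_cong[OF R_submodule_Rspan assms(2) mem_Rspan_self refl _ T_L]
      by blast
  qed simp
qed

end
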